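(* The map $f$ defined below is a bijection from $\mathcal{G}_2$ onto $\mathcal{A}_2$, and $f(\pi)$ is a partition of the same integer as $\pi$.
   Context: Partitions are nonincreasing finite sequences of positive integers; $m_j(\pi)$ is the multiplicity of $j$ in $\pi$, $\ell(\pi)$ the number of parts, and $\pi\cup\lambda$ the partition formed by all parts of both (as a multiset). $\langle a^{m}\rangle$ denotes the partition consisting of $m$ copies of $a$. $\mathcal{G}_2$ is the set of partitions $\pi$ with $m_1(\pi)\le 1$ and $m_j(\pi)+m_{j+1}(\pi)\le 2$ for all $j\ge1$. For $\pi\in\mathcal{G}_2$ every part has multiplicity at most $2$. Let $D(\pi)$ be the number of distinct parts of multiplicity $2$, let $R_1(\pi)>R_2(\pi)>\dots>R_{D(\pi)}(\pi)$ be these parts, and set $R_{D(\pi)+1}(\pi)=0$, $R_0(\pi)=\infty$. For $0\le k\le D(\pi)$ let $\pi^{(k)}$ be the partition consisting of the parts of $\pi$ strictly between $R_{k+1}(\pi)$ and $R_k(\pi)$ (these parts are distinct). For a partition $\mu$ and integer $c$, $\mu+\langle c^{\ell(\mu)}\rangle$ denotes $\mu$ with $c$ added to each part. Define $$f(\pi)=\bigcup_{i=1}^{D(\pi)}\big\langle (2i)^{R_i(\pi)-R_{i+1}(\pi)-\ell(\pi^{(i)})}\big\rangle\ \cup\ \bigcup_{i=0}^{D(\pi)}\Big(\pi^{(i)}+\langle (2i)^{\ell(\pi^{(i)})}\rangle\Big).$$ For a partition $\lambda$, $R_1(\lambda)$ is its largest part of multiplicity $\ge2$ (or $0$ if none).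 $\mathcal{A}_2$ is the set of partitions $\lambda$ such that $m_j(\lambda)\le1$ for odd $j$, $m_j(\lambda)=0$ for odd $j<R_1(\lambda)$, and $m_j(\lambda)\ge 2$ for even $j$ with $0<j<R_1(\lambda)$. *)

theory Defs
  imports Main "HOL-Library.Multiset"
begin

text \<open>Partitions are represented as finite multisets of positive integers;
  the multiplicity m_j(pi) is count pi j, the number of parts is size pi,
  the union of partitions is the multiset sum, and the partition
  <a^m> is replicate_mset m a.\<close>

definition is_partition :: "nat multiset \<Rightarrow> bool" where
  "is_partition p \<longleftrightarrow> 0 \<notin># p"

definition G2 :: "nat multiset set" where
  "G2 = {p. is_partition p \<and> count p 1 \<le> 1 \<and>
             (\<forall>j\<ge>1. count p j + count p (j + 1) \<le> 2)}"

definition Rlist :: "nat multiset \<Rightarrow> nat list" where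
  "Rlist p = rev (sorted_list_of_set {j. count p j = 2})"

definition D :: "nat multiset \<Rightarrow> nat" where
  "D p = length (Rlist p)"

text \<open>R p i for 1 <= i <= D p is R_i(pi); R p (D p + 1) = 0.
  (R_0 = infinity is treated separately in piK.)\<close>
definition R :: "nat multiset \<Rightarrow> nat \<Rightarrow> nat" where
  "R p i = (if 1 \<le> i \<and> i \<le> D p then Rlist p ! (i - 1) else 0)"

definition piK :: "nat multiset \<Rightarrow> nat \<Rightarrow> nat multiset" where
  "piK p k = filter_mset (\<lambda>x. R p (k + 1) < x \<and> (k = 0 \<or> x < R p k)) p"

definition f :: "nat multiset \<Rightarrow> nat multiset" where
  "f p = (\<Sum>i\<in>{1..D p}. replicate_mset (R p i - R p (i + 1) - size (piK p i)) (2 * i))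
       + (\<Sum>i\<in>{0..D p}. image_mset (\<lambda>x. x + 2 * i) (piK p i))"

definition R1 :: "nat multiset \<Rightarrow> nat" where
  "R1 l = Max (insert 0 {j. count l j \<ge> 2})"

definition A2 :: "nat multiset set" where
  "A2 = {l. is_partition l \<and>
            (\<forall>j. odd j \<longrightarrow> count l j \<le> 1) \<and>
            (\<forall>j. odd j \<and> j < R1 l \<longrightarrow> count l j = 0) \<and>
            (\<forall>j. even j \<and> 0 < j \<and> j < R1 l \<longrightarrow> count l j \<ge> 2)}"

end

theory Submission
  imports Defs
begin

text \<open>
  Let m = R_1(\<pi>) be the largest repeated part of \<pi> \<in> G2. The parts of \<pi> above m (that is,
  \<pi>^(0)) are distinct and at least m + 2, and the parts below m form a partition q \<in> G2 with
  parts at most m - 2. Unfolding the definition gives f(\<pi>) = \<langle>2^c\<rangle> \<union> \<pi>^(0) \<union> (f(q) + 2) with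
  c = m - #f(q) \<ge> 2, because the number of parts #f(q) is R_1(q) + #q^(0). So f is an iterated gluing, which
  preserves the weight and, by induction, lands in A2.

  The gluing point m can be read off the glued partition: it is the largest s such that at
  least s parts are \<le> s, because the parts up to m number exactly m, while the distinct parts
  above m + 1 never catch up. Hence gluing is injective, and so is f by induction. For
  surjectivity, the same split point cuts any \<lambda> \<in> A2 with a repeated part into glued pieces;
  the repeated even parts 2, 4, \<dots>, R_1(\<lambda>) force the split point to be at least R_1(\<lambda>).
\<close>

lemma count_image_mset_add:
  "count (image_mset (\<lambda>x. x + k) M) (j::nat) = (if k \<le> j then count M (j - k) else 0)"
  by (induction M) auto

lemma sum_mset_image_mset_add:
  "sum_mset (image_mset (\<lambda>x. x + k) M) = sum_mset M + k * size M" for k :: nat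
  by (induction M) auto

lemma image_mset_add_cancel:
  fixes M N :: "nat multiset"
  assumes "image_mset (\<lambda>x. x + k) M = image_mset (\<lambda>x. x + k) N"
  shows "M = N"
proof -
  have "image_mset (\<lambda>x. x + k - k) M = image_mset (\<lambda>x. x + k - k) N"
    using arg_cong[OF assms, of "image_mset (\<lambda>x. x - k)"] by (simp add: multiset.map_comp o_def)
  then show ?thesis by simp
qed

lemma count_image_mset_diff_filter:
  fixes M :: "nat multiset" and k r :: nat
  defines "\<mu> \<equiv> image_mset (\<lambda>x. x - k) (filter_mset (\<lambda>y. k < y \<and> y \<le> r) M)"
  assumes "k \<le> j"
  shows "count \<mu> (j - k) = (if k < j \<and> j \<le> r then count M j else 0)"
proof -
  let ?F = "filter_mset (\<lambda>y. k < y \<and> y \<le> r) M"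
  have "image_mset (\<lambda>x. x + k) \<mu> = image_mset (\<lambda>x. x - k + k) ?F"
    unfolding \<mu>_def by (simp add: multiset.map_comp o_def)
  also have "\<dots> = ?F" by (induction M) auto
  finally show ?thesis using count_image_mset_add[of k \<mu> j] assms(2) by auto
qed

lemma size_le_card_if_count_le_1:
  assumes "\<And>x. count M x \<le> 1" "set_mset M \<subseteq> A" "finite A"
  shows "size M \<le> card A"
proof -
  have "M \<subseteq># mset_set A"
    unfolding subseteq_mset_def
  proof
    fix x show "count M x \<le> count (mset_set A) x"
      using assms by (cases "x \<in># M") (auto simp: not_in_iff)
  qed
  then show ?thesis using size_mset_mono by fastforce
qed

lemma size_filter_mset_atMost_Suc:
  "size (filter_mset (\<lambda>y. y \<le> Suc s) M) = size (filter_mset (\<lambda>y. y \<le> s) M) + count M (Suc s)"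
proof -
  have "filter_mset (\<lambda>y. y \<le> Suc s) M = filter_mset (\<lambda>y. y \<le> s) M + replicate_mset (count M (Suc s)) (Suc s)"
    by (rule multiset_eqI) auto
  then show ?thesis by simp
qed

lemma image_mset_sum: "image_mset g (sum F A) = (\<Sum>i\<in>A. image_mset g (F i))"
  by (induction A rule: infinite_finite_induct) auto

lemma sum_atLeast_Suc_atMost_Suc_shift:
  "sum g {k..Suc n} = g k + (\<Sum>j\<in>{k..n}. g (Suc j))" if "k \<le> Suc n"
  using that sum.atLeast_Suc_atMost[OF that, of g] sum.shift_bounds_cl_Suc_ivl[of g k n] by simp

section \<open>Repeated parts and the unfolding of f\<close>

lemma finite_repeated_parts: "finite {j. count p j = (2::nat)}"
  by (rule finite_subset[of _ "set_mset p"]) (auto simp flip: count_greater_zero_iff)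

lemma set_Rlist: "set (Rlist p) = {j. count p j = 2}"
  unfolding Rlist_def using finite_repeated_parts[of p] by simp

lemma D_eq_card: "D p = card {j. count p j = 2}"
  unfolding D_def Rlist_def using finite_repeated_parts by simp

lemma count_R: "1 \<le> i \<Longrightarrow> i \<le> D p \<Longrightarrow> count p (R p i) = 2"
proof -
  assume "1 \<le> i" "i \<le> D p"
  then have "R p i \<in> set (Rlist p)" unfolding R_def D_def by auto
  then show ?thesis by (simp add: set_Rlist)
qed

lemma R_eq_0: "\<not> (1 \<le> i \<and> i \<le> D p) \<Longrightarrow> R p i = 0"
  unfolding R_def by auto

lemma Rlist_eq_Max_Cons:
  assumes ne: "{j. count p j = 2} \<noteq> {}"
  defines "m \<equiv> Max {j. count p j = 2}"
  shows "Rlist p = m # Rlist (filter_mset (\<lambda>x. x < m) p)"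
proof -
  let ?E = "{j. count p j = 2}"
  have fin: "finite (?E - {m})" using finite_repeated_parts by auto
  have mE: "m \<in> ?E" using ne finite_repeated_parts unfolding m_def by (rule Max_in[rotated])
  have le_m: "j \<in> ?E \<Longrightarrow> j \<le> m" for j using finite_repeated_parts[of p] unfolding m_def by simp
  have below: "{j. count (filter_mset (\<lambda>x. x < m) p) j = 2} = ?E - {m}"
    using le_m by (auto simp: count_filter_mset) (metis less_le)
  let ?L = "sorted_list_of_set (?E - {m}) @ [m]"
  have "sorted_wrt (<) ?L" using fin le_m
    by (auto simp: sorted_wrt_append strict_sorted_list_of_set intro: le_neq_trans)
  moreover have "set ?L = ?E" using fin mE by auto
  moreover have "length ?L = card ?E"
    using ne fin mE finite_repeated_parts[of p] by (simp add: card_gt_0_iff card_Diff_singleton)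
  ultimately have "sorted_list_of_set ?E = ?L"
    using finite_repeated_parts[of p] sorted_list_of_set_unique by blast
  then show ?thesis unfolding Rlist_def below by simp
qed

lemma
  assumes "Rlist p = m # Rlist q"
  shows D_Rlist_Cons: "D p = Suc (D q)"
    and R_1_Rlist_Cons: "R p 1 = m"
    and R_Suc_Rlist_Cons: "R p (Suc (Suc i)) = R q (Suc i)"
  using assms by (auto simp: D_def R_def)

definition lower_part :: "nat multiset \<Rightarrow> nat multiset" where
  "lower_part p = filter_mset (\<lambda>x. x < R p 1) p"

lemma piK_0: "piK p 0 = filter_mset (\<lambda>x. R p 1 < x) p"
  unfolding piK_def by simp

lemma piK_Suc_Rlist_Cons:
  assumes Rl: "Rlist p = m # Rlist q" and q: "q = filter_mset (\<lambda>x. x < m) p"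
    and R_less: "\<And>i. R q i < m"
  shows "piK p (Suc k) = piK q k"
proof -
  note R = R_1_Rlist_Cons[OF Rl] R_Suc_Rlist_Cons[OF Rl]
  have "R p (Suc k + 1) < x \<and> (Suc k = 0 \<or> x < R p (Suc k)) \<longleftrightarrow>
        x < m \<and> R q (Suc k) < x \<and> (k = 0 \<or> x < R q k)" for x
    using R R_less[of k] by (cases k) auto
  then show ?thesis unfolding piK_def q filter_filter_mset by (intro filter_mset_cong) auto
qed

lemma f_Rlist_Cons:
  assumes Rl: "Rlist p = m # Rlist q" and q: "q = filter_mset (\<lambda>x. x < m) p"
    and R_less: "\<And>i. R q i < m"
  shows "f p = replicate_mset (m - R q 1 - size (piK q 0)) 2 + piK p 0
              + image_mset (\<lambda>x. x + 2) (f q)"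
proof -
  note R = D_Rlist_Cons[OF Rl] R_1_Rlist_Cons[OF Rl] R_Suc_Rlist_Cons[OF Rl]
  note piK = piK_Suc_Rlist_Cons[OF assms]
  let ?A = "\<lambda>p i. replicate_mset (R p i - R p (i + 1) - size (piK p i)) (2 * i)"
  let ?B = "\<lambda>p i. image_mset (\<lambda>x. x + 2 * i) (piK p i)"
  have shift: "(\<lambda>x. x + 2) \<circ> (\<lambda>x. x + 2 * j) = (\<lambda>x. x + 2 * Suc j)" for j :: nat
    by auto
  have "(\<Sum>i\<in>{1..D p}. ?A p i) = ?A p 1 + (\<Sum>j\<in>{1..D q}. ?A p (Suc j))"
    using R sum_atLeast_Suc_atMost_Suc_shift[of 1 "D q" "?A p"] by simp
  also have "(\<Sum>j\<in>{1..D q}. ?A p (Suc j)) = (\<Sum>j\<in>{1..D q}. image_mset (\<lambda>x. x + 2) (?A q j))"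
    by (intro sum.cong) (auto simp: R piK Suc_le_eq dest!: gr0_implies_Suc)
  finally have A: "(\<Sum>i\<in>{1..D p}. ?A p i) = replicate_mset (m - R q 1 - size (piK q 0)) 2
      + image_mset (\<lambda>x. x + 2) (\<Sum>i\<in>{1..D q}. ?A q i)"
    using R piK by (simp add: image_mset_sum)
  have "(\<Sum>i\<in>{0..D p}. ?B p i) = ?B p 0 + (\<Sum>j\<in>{0..D q}. ?B p (Suc j))"
    using R sum_atLeast_Suc_atMost_Suc_shift[of 0 "D q" "?B p"] by simp
  also have "(\<Sum>j\<in>{0..D q}. ?B p (Suc j)) = (\<Sum>j\<in>{0..D q}. image_mset (\<lambda>x. x + 2) (?B q j))"
    using piK shift by (simp add: multiset.map_comp)
  finally have B: "(\<Sum>i\<in>{0..D p}. ?B p i) = piK p 0 + image_mset (\<lambda>x. x + 2) (\<Sum>i\<in>{0..D q}. ?B q i)"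
    by (simp add: image_mset_sum)
  show ?thesis unfolding f_def[of p] f_def[of q] A B by (simp add: ac_simps)
qed

section \<open>Peeling off the largest repeated part\<close>

lemma G2_count_le_2: "p \<in> G2 \<Longrightarrow> count p j \<le> 2"
  unfolding G2_def is_partition_def by (cases j) (auto simp: not_in_iff dest!: spec[of _ j])

lemma G2_count_0: "p \<in> G2 \<Longrightarrow> count p 0 = 0"
  unfolding G2_def is_partition_def by (simp add: not_in_iff)

lemma G2_no_repeats:
  assumes "p \<in> G2" "D p = 0"
  shows "count p j \<le> 1"
proof -
  have "count p j \<noteq> 2" using assms(2) finite_repeated_parts[of p] by (auto simp: D_eq_card)
  then show ?thesis using G2_count_le_2[OF assms(1), of j] by simp
qed

lemma G2_filter_mset:
  assumes p: "p \<in> G2"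
  shows "filter_mset P p \<in> G2"
proof -
  have sub: "count (filter_mset P p) j \<le> count p j" for j by simp
  have c1: "count p 1 \<le> 1" and pair: "j \<ge> 1 \<Longrightarrow> count p j + count p (j + 1) \<le> 2" for j
    using p by (auto simp: G2_def)
  show ?thesis
    unfolding G2_def is_partition_def
  proof (intro CollectI conjI allI impI)
    show "0 \<notin># filter_mset P p" using G2_count_0[OF p] by (simp add: not_in_iff)
    show "count (filter_mset P p) 1 \<le> 1" using c1 sub[of 1] by linarith
    show "count (filter_mset P p) j + count (filter_mset P p) (j + 1) \<le> 2" if "1 \<le> j" for j
      using pair[OF that] sub[of j] sub[of "j + 1"] by linarith
  qed
qed

lemma G2_peel:
  assumes p: "p \<in> G2" and D: "D p \<noteq> 0"
  defines "m \<equiv> R p 1"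
  shows "p = piK p 0 + replicate_mset 2 m + lower_part p" "2 \<le> m" "count p m = 2"
    "lower_part p \<in> G2" "\<forall>x\<in>#lower_part p. x + 2 \<le> m"
    "\<forall>x\<in>#piK p 0. m + 2 \<le> x" "\<forall>x. count (piK p 0) x \<le> 1"
    "Rlist p = m # Rlist (lower_part p)" "\<And>i. R (lower_part p) i < m"
proof -
  let ?E = "{j. count p j = 2}"
  have ne: "?E \<noteq> {}" using D finite_repeated_parts[of p] by (auto simp: D_eq_card)
  have Rl: "Rlist p = Max ?E # Rlist (filter_mset (\<lambda>x. x < Max ?E) p)"
    by (rule Rlist_eq_Max_Cons[OF ne])
  have mM: "m = Max ?E" using R_1_Rlist_Cons[OF Rl] unfolding m_def by simp
  show "Rlist p = m # Rlist (lower_part p)" using Rl unfolding lower_part_def m_def[symmetric] mM .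
  show cm: "count p m = 2" using Max_in[OF finite_repeated_parts ne] mM by simp
  have above: "m < j \<Longrightarrow> count p j \<le> 1" for j
    using Max_ge[OF finite_repeated_parts[of p], of j] mM G2_count_le_2[OF p, of j] by force
  have c1: "count p 1 \<le> 1" and pair: "j \<ge> 1 \<Longrightarrow> count p j + count p (j + 1) \<le> 2" for j
    using p by (auto simp: G2_def)
  show m2: "2 \<le> m" using cm c1 G2_count_0[OF p] by (cases m; cases "m - 1") auto
  have cm1: "count p (m + 1) = 0" "count p (m - 1) = 0"
    using pair[of m] pair[of "m - 1"] cm m2 by auto
  show "p = piK p 0 + replicate_mset 2 m + lower_part p"
    unfolding piK_0 lower_part_def m_def[symmetric] by (rule multiset_eqI) (auto simp: cm)
  show "\<forall>x\<in>#lower_part p. x + 2 \<le> m"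
  proof
    fix x assume "x \<in># lower_part p"
    then have "x < m" "x \<in># p" unfolding lower_part_def m_def by auto
    then show "x + 2 \<le> m" using cm1 by (cases "x = m - 1") (auto simp flip: count_greater_zero_iff)
  qed
  show "\<forall>x\<in>#piK p 0. m + 2 \<le> x"
  proof
    fix x assume "x \<in># piK p 0"
    then have "m < x" "x \<in># p" unfolding piK_0 m_def by auto
    then show "m + 2 \<le> x" using cm1 by (cases "x = m + 1") (auto simp flip: count_greater_zero_iff)
  qed
  show "\<forall>x. count (piK p 0) x \<le> 1" unfolding piK_0 m_def[symmetric] using above by auto
  show "lower_part p \<in> G2" unfolding lower_part_def by (rule G2_filter_mset[OF p])
  show "R (lower_part p) i < m" for i
  proof (cases "1 \<le> i \<and> i \<le> D (lower_part p)")
    case True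
    then have "count (lower_part p) (R (lower_part p) i) = 2" by (simp add: count_R)
    then show ?thesis unfolding lower_part_def m_def by (auto split: if_splits)
  qed (use R_eq_0 m2 in simp)
qed

lemma G2_unpeel:
  assumes q: "q \<in> G2" and q_le: "\<forall>x\<in>#q. x + 2 \<le> r" and T_ge: "\<forall>x\<in>#T. r + 2 \<le> x"
    and T_distinct: "\<forall>x. count T x \<le> 1" and r: "2 \<le> r"
    and p: "p = T + replicate_mset 2 r + q"
  shows "p \<in> G2" "D p \<noteq> 0" "R p 1 = r" "piK p 0 = T" "lower_part p = q"
proof -
  have T0: "j < r + 2 \<Longrightarrow> count T j = 0" for j using T_ge by (meson leD not_in_iff)
  have q0: "r < j + 2 \<Longrightarrow> count q j = 0" for j using q_le by (meson leD not_in_iff)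
  have cp: "count p j = count T j + (if j = r then 2 else 0) + count q j" for j
    unfolding p by simp
  have q1: "count q 1 \<le> 1" and q_pair: "j \<ge> 1 \<Longrightarrow> count q j + count q (j + 1) \<le> 2" for j
    using q by (auto simp: G2_def)
  have r_rep: "count p r = 2" using cp[of r] T0[of r] q0[of r] by simp
  have rep_le: "count p j = 2 \<Longrightarrow> j \<le> r" for j
    using cp[of j] q0[of j] T_distinct[rule_format, of j] by (cases "j \<le> r") auto
  have ne: "{j. count p j = 2} \<noteq> {}" using r_rep by blast
  have r_Max: "Max {j. count p j = 2} = r"
    using r_rep rep_le finite_repeated_parts[of p] by (intro Max_eqI) auto
  show "D p \<noteq> 0" and R1: "R p 1 = r"
    using D_Rlist_Cons[OF Rlist_eq_Max_Cons[OF ne]] R_1_Rlist_Cons[OF Rlist_eq_Max_Cons[OF ne]] r_Max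
    by simp_all
  show "piK p 0 = T" "lower_part p = q"
    unfolding piK_0 lower_part_def R1 by (rule multiset_eqI; use T0 q0 in \<open>auto simp: cp\<close>)+
  have "count p j + count p (j + 1) \<le> 2" if "1 \<le> j" for j
  proof -
    consider "j + 2 \<le> r" | "j + 1 = r" | "j = r" | "r < j" by linarith
    then show ?thesis
    proof cases
      case 4
      then show ?thesis using cp[of j] cp[of "j + 1"] q0[of j] q0[of "j + 1"]
          T_distinct[rule_format, of j] T_distinct[rule_format, of "j + 1"] by simp
    qed (use cp[of j] cp[of "j + 1"] T0[of j] T0[of "j + 1"] q0[of j] q0[of "j + 1"] q_pair[OF that] in simp_all)
  qed
  moreover have "0 \<notin># p" using cp[of 0] T0[of 0] G2_count_0[OF q] r by (simp add: not_in_iff)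
  moreover have "count p 1 \<le> 1" using cp[of 1] T0[of 1] q1 r by simp
  ultimately show "p \<in> G2" unfolding G2_def is_partition_def by blast
qed

lemma G2_induct[consumes 1, case_names no_repeats peel]:
  assumes "p \<in> G2"
    and no_repeats: "\<And>p. p \<in> G2 \<Longrightarrow> D p = 0 \<Longrightarrow> P p"
    and peel: "\<And>p. p \<in> G2 \<Longrightarrow> D p \<noteq> 0 \<Longrightarrow> P (lower_part p) \<Longrightarrow> P p"
  shows "P p"
  using assms(1)
proof (induction "size p" arbitrary: p rule: less_induct)
  case less
  show ?case
  proof (cases "D p = 0")
    case False
    have "size (lower_part p) < size p"
      using arg_cong[OF G2_peel(1)[OF less.prems False], of size] by simp
    then show ?thesis using False less G2_peel(4)[OF less.prems False] peel by blast
  qed (use less.prems no_repeats in blast)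
qed

section \<open>Gluing\<close>

definition glue :: "nat \<Rightarrow> nat multiset \<Rightarrow> nat multiset \<Rightarrow> nat multiset" where
  "glue c T \<mu> = replicate_mset c 2 + T + image_mset (\<lambda>x. x + 2) \<mu>"

definition glue_admissible :: "nat \<Rightarrow> nat \<Rightarrow> nat multiset \<Rightarrow> nat multiset \<Rightarrow> bool" where
  "glue_admissible m c T \<mu> \<longleftrightarrow> 2 \<le> c \<and> c + size \<mu> = m \<and> (\<forall>x\<in>#\<mu>. 0 < x \<and> x + 2 \<le> m)
     \<and> (\<forall>x\<in>#T. m + 2 \<le> x) \<and> (\<forall>x. count T x \<le> 1)"

lemma glue_admissibleD:
  assumes "glue_admissible m c T \<mu>"
  shows "2 \<le> c" "c + size \<mu> = m" "j < m + 2 \<Longrightarrow> count T j = 0" "count T j \<le> 1"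
    "count \<mu> 0 = 0" "m < j + 2 \<Longrightarrow> count \<mu> j = 0" "x \<in># T \<Longrightarrow> m + 2 \<le> x"
  using assms unfolding glue_admissible_def by (auto simp: not_in_iff[symmetric] dest: leD)

lemma count_glue:
  "count (glue c T \<mu>) j = (if j = 2 then c else 0) + count T j + (if 2 \<le> j then count \<mu> (j - 2) else 0)"
  unfolding glue_def count_union count_image_mset_add by simp

lemma finite_parts_count_ge_2: "finite {j. 2 \<le> count l (j::nat)}"
  by (rule finite_subset[of _ "set_mset l"]) (auto simp flip: count_greater_zero_iff)

lemma le_R1: "2 \<le> count l j \<Longrightarrow> j \<le> R1 l"
  unfolding R1_def using finite_parts_count_ge_2[of l] by auto

lemma R1_le: "(\<And>j. 2 \<le> count l j \<Longrightarrow> j \<le> b) \<Longrightarrow> R1 l \<le> b"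
  unfolding R1_def using finite_parts_count_ge_2[of l] by (auto intro: Max.boundedI)

lemma R1_eq_0_or_count_ge_2: "R1 l = 0 \<or> 2 \<le> count l (R1 l)"
proof -
  have "R1 l \<in> insert 0 {j. 2 \<le> count l j}"
    unfolding R1_def using finite_parts_count_ge_2[of l] by (intro Max_in) auto
  then show ?thesis by auto
qed

lemma A2_partsD:
  assumes "l \<in> A2"
  shows "count l 0 = 0" "odd j \<Longrightarrow> count l j \<le> 1" "odd j \<Longrightarrow> j < R1 l \<Longrightarrow> count l j = 0"
    "even j \<Longrightarrow> 0 < j \<Longrightarrow> j < R1 l \<Longrightarrow> 2 \<le> count l j"
  using assms unfolding A2_def is_partition_def by (auto simp: not_in_iff)

lemma A2I:
  assumes "count l 0 = 0" "\<And>j. odd j \<Longrightarrow> count l j \<le> 1" "\<And>j. odd j \<Longrightarrow> j < R1 l \<Longrightarrow> count l j = 0"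
    "\<And>j. even j \<Longrightarrow> 0 < j \<Longrightarrow> j < R1 l \<Longrightarrow> 2 \<le> count l j"
  shows "l \<in> A2"
  using assms unfolding A2_def is_partition_def by (auto simp: not_in_iff)

lemma R1_glue:
  assumes adm: "glue_admissible m c T \<mu>" and \<mu>: "\<mu> \<in> A2"
  shows "R1 (glue c T \<mu>) = R1 \<mu> + 2"
proof (rule antisym)
  note adm' = glue_admissibleD[OF adm]
  show "R1 (glue c T \<mu>) \<le> R1 \<mu> + 2"
  proof (rule R1_le)
    fix j assume j: "2 \<le> count (glue c T \<mu>) j"
    show "j \<le> R1 \<mu> + 2"
    proof (cases "2 < j \<and> j < m + 2")
      case True
      then have "2 \<le> count \<mu> (j - 2)" using j adm'(3) count_glue[of c T \<mu> j] by simp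
      then show ?thesis using le_R1 by fastforce
    next
      case False
      show ?thesis
      proof (rule ccontr)
        assume "\<not> j \<le> R1 \<mu> + 2"
        then have "count (glue c T \<mu>) j \<le> 1"
          using False count_glue[of c T \<mu> j] adm'(6)[of "j - 2"] adm'(4)[of j] by auto
        then show False using j by simp
      qed
    qed
  qed
  show "R1 \<mu> + 2 \<le> R1 (glue c T \<mu>)"
    using R1_eq_0_or_count_ge_2[of \<mu>] adm'(1) count_glue[of c T \<mu>] le_R1[of "glue c T \<mu>" 2]
      le_R1[of "glue c T \<mu>" "R1 \<mu> + 2"]
    by auto
qed

lemma glue_in_A2:
  assumes adm: "glue_admissible m c T \<mu>" and \<mu>: "\<mu> \<in> A2"
  shows "glue c T \<mu> \<in> A2"
proof (rule A2I)
  let ?l = "glue c T \<mu>"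
  note adm' = glue_admissibleD[OF adm]
  have R1_le_m: "R1 \<mu> + 2 \<le> m"
    using R1_eq_0_or_count_ge_2[of \<mu>] adm'(1,2) adm'(6)[of "R1 \<mu>"] by linarith
  note cl = count_glue[of c T \<mu>] and R1l = R1_glue[OF adm \<mu>] and \<mu>A = A2_partsD[OF \<mu>]
  show "count ?l 0 = 0" using cl adm'(3)[of 0] by simp
  show "count ?l j \<le> 1" if "odd j" for j
    using cl[of j] adm'(3,4)[of j] adm'(6)[of "j - 2"] \<mu>A(2)[of "j - 2"] that
    by (cases "2 \<le> j"; cases "j < m + 2") auto
  show "count ?l j = 0" if "odd j" "j < R1 ?l" for j
    using cl[of j] adm'(3)[of j] \<mu>A(3)[of "j - 2"] that R1l R1_le_m by (cases "2 \<le> j") auto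
  show "2 \<le> count ?l j" if "even j" "0 < j" "j < R1 ?l" for j
  proof (cases "j = 2")
    case True then show ?thesis using cl[of j] adm'(1) by simp
  next
    case False
    then have "2 < j" "j - 2 < R1 \<mu>" using that R1l by presburger+
    then show ?thesis using cl[of j] \<mu>A(4)[of "j - 2"] that by auto
  qed
qed

definition split_point :: "nat multiset \<Rightarrow> nat" where
  "split_point l = Max {s. s \<le> size (filter_mset (\<lambda>y. y \<le> s) l)}"

lemma finite_split_point_candidates: "finite {s. s \<le> size (filter_mset (\<lambda>y. y \<le> s) l)}"
  by (rule finite_subset[of _ "{..size l}"]) (auto intro: order_trans size_filter_mset_lesseq)

lemma le_split_point: "s \<le> size (filter_mset (\<lambda>y. y \<le> s) l) \<Longrightarrow> s \<le> split_point l"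
  unfolding split_point_def using finite_split_point_candidates by simp

lemma split_point_le_size: "split_point l \<le> size (filter_mset (\<lambda>y. y \<le> split_point l) l)"
proof -
  have "split_point l \<in> {s. s \<le> size (filter_mset (\<lambda>y. y \<le> s) l)}"
    unfolding split_point_def using finite_split_point_candidates
    by (rule Max_in) (auto intro: exI[of _ 0])
  then show ?thesis by simp
qed

lemma size_lt_Suc_split_point:
  "size (filter_mset (\<lambda>y. y \<le> Suc (split_point l)) l) < Suc (split_point l)"
  using le_split_point[of "Suc (split_point l)" l] by linarith

lemma split_point_eqI:
  assumes "s \<le> size (filter_mset (\<lambda>y. y \<le> s) l)"
    and "\<And>t. s < t \<Longrightarrow> size (filter_mset (\<lambda>y. y \<le> t) l) < t"
  shows "split_point l = s"
  using le_split_point[OF assms(1)] split_point_le_size[of l] assms(2)[of "split_point l"] by fastforce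

lemma
  assumes adm: "glue_admissible m c T \<mu>"
  shows split_point_glue: "split_point (glue c T \<mu>) = m"
    and filter_greater_glue: "filter_mset (\<lambda>y. m < y) (glue c T \<mu>) = T"
    and count_2_glue: "count (glue c T \<mu>) 2 = c"
proof -
  note adm' = glue_admissibleD[OF adm]
  have size_le: "size (filter_mset (\<lambda>y. y \<le> s) (glue c T \<mu>)) = m + size (filter_mset (\<lambda>y. y \<le> s) T)"
    if "m \<le> s" for s
  proof -
    have "filter_mset (\<lambda>y. y \<le> s) (glue c T \<mu>) = glue c (filter_mset (\<lambda>y. y \<le> s) T) \<mu>"
      using that adm'(1,2) adm'(6)[of "_ - 2"] by (intro multiset_eqI) (auto simp: count_glue)
    then show ?thesis using adm'(2) by (simp only:) (simp add: glue_def)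
  qed
  have "size (filter_mset (\<lambda>y. y \<le> t) T) < t - m" if "m < t" for t
  proof -
    have "size (filter_mset (\<lambda>y. y \<le> t) T) \<le> card {m + 2..t}"
      using adm'(4,7) by (intro size_le_card_if_count_le_1) auto
    then show ?thesis using that by simp
  qed
  moreover have "filter_mset (\<lambda>y. y \<le> m) T = {#}" using adm'(3) by (auto simp flip: count_greater_zero_iff)
  ultimately show "split_point (glue c T \<mu>) = m"
    using size_le by (intro split_point_eqI) (auto, fastforce)
  show "filter_mset (\<lambda>y. m < y) (glue c T \<mu>) = T"
    using adm'(1,2,3) adm'(6)[of "_ - 2"] by (intro multiset_eqI) (auto simp: count_glue)
  show "count (glue c T \<mu>) 2 = c"
    using adm'(1,2,3,5) by (simp add: count_glue)
qed

lemma glue_inj: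
  assumes "glue_admissible m c T \<mu>" "glue_admissible m' c' T' \<mu>'" "glue c T \<mu> = glue c' T' \<mu>'"
  shows "m = m'" "T = T'" "\<mu> = \<mu>'"
proof -
  show m: "m = m'" using split_point_glue[OF assms(1)] split_point_glue[OF assms(2)] assms(3) by simp
  show T: "T = T'" using filter_greater_glue[OF assms(1)] filter_greater_glue[OF assms(2)] assms(3) m by simp
  have "c = c'" using count_2_glue[OF assms(1)] count_2_glue[OF assms(2)] assms(3) by simp
  then have "image_mset (\<lambda>x. x + 2) \<mu> = image_mset (\<lambda>x. x + 2) \<mu>'"
    using assms(3) unfolding glue_def T by simp
  then show "\<mu> = \<mu>'" by (rule image_mset_add_cancel)
qed

lemma A2_R1_eq_0:
  assumes l: "l \<in> A2" and R: "R1 l = 0"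
  shows "l \<in> G2" "D l = 0"
proof -
  have le1: "count l j \<le> 1" for j
  proof (rule ccontr)
    assume "\<not> count l j \<le> 1"
    then have "j \<le> R1 l" by (intro le_R1) simp
    then show False using R A2_partsD(1)[OF l] \<open>\<not> count l j \<le> 1\<close> by simp
  qed
  have "count l j + count l (j + 1) \<le> 2" for j using le1[of j] le1[of "j + 1"] by linarith
  then show "l \<in> G2"
    using A2_partsD(1)[OF l] le1 unfolding G2_def is_partition_def by (auto simp: not_in_iff)
  have "count l j \<noteq> 2" for j using le1[of j] by linarith
  then have "{j. count l j = 2} = {}" by simp
  then show "D l = 0" by (simp add: D_eq_card)
qed

lemma A2_size_filter_even:
  assumes l: "l \<in> A2" and R: "2 \<le> count l (R1 l)"
  shows "2 * k \<le> R1 l \<Longrightarrow> 2 * k \<le> size (filter_mset (\<lambda>y. y \<le> 2 * k) l)"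
proof (induction k)
  case (Suc k)
  have "2 \<le> count l (Suc (2 * k + 1))"
    using R A2_partsD(4)[OF l, of "2 * Suc k"] Suc.prems by (cases "2 * Suc k = R1 l") auto
  then show ?case
    using Suc size_filter_mset_atMost_Suc[of "2 * k + 1" l] size_filter_mset_atMost_Suc[of "2 * k" l]
    by simp
qed simp

definition middle_parts :: "nat \<Rightarrow> nat multiset \<Rightarrow> nat multiset" where
  "middle_parts r l = image_mset (\<lambda>x. x - 2) (filter_mset (\<lambda>y. 2 < y \<and> y \<le> r) l)"

lemma count_middle_parts:
  shows "2 \<le> j \<Longrightarrow> count (middle_parts r l) (j - 2) = (if 2 < j \<and> j \<le> r then count l j else 0)"
    and "count (middle_parts r l) i = (if 0 < i \<and> i + 2 \<le> r then count l (i + 2) else 0)"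
proof -
  show "2 \<le> j \<Longrightarrow> count (middle_parts r l) (j - 2) = (if 2 < j \<and> j \<le> r then count l j else 0)" for j
    unfolding middle_parts_def by (rule count_image_mset_diff_filter)
  from this[of "i + 2"] show "count (middle_parts r l) i = (if 0 < i \<and> i + 2 \<le> r then count l (i + 2) else 0)"
    by simp
qed

lemma A2_middle_parts:
  assumes l: "l \<in> A2" and R: "2 \<le> count l (R1 l)" "R1 l \<le> r"
  shows "middle_parts r l \<in> A2"
proof -
  let ?\<mu> = "middle_parts r l"
  note c\<mu> = count_middle_parts[where r = r and l = l]
  have R2: "2 \<le> R1 l"
    using R(1) A2_partsD(1)[OF l] A2_partsD(2)[OF l, of "R1 l"] by (cases "R1 l"; cases "R1 l - 1") auto
  have "R1 ?\<mu> = R1 l - 2"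
  proof (rule antisym)
    show "R1 ?\<mu> \<le> R1 l - 2"
      using c\<mu>(2) le_R1[of l] by (intro R1_le) (fastforce split: if_splits)
    show "R1 l - 2 \<le> R1 ?\<mu>"
    proof (cases "R1 l = 2")
      case False
      then have "count ?\<mu> (R1 l - 2) = count l (R1 l)" using c\<mu>(1)[of "R1 l"] R2 R(2) by simp
      then show ?thesis using R(1) by (intro le_R1) simp
    qed simp
  qed
  then show ?thesis
    using c\<mu>(2) A2_partsD[OF l] R2 R(2) by (intro A2I) auto
qed

lemma A2_split_point:
  assumes l: "l \<in> A2" and R: "R1 l \<noteq> 0"
  defines "r \<equiv> split_point l"
  shows "2 \<le> count l (R1 l)" "2 \<le> R1 l" "R1 l \<le> r" "2 \<le> count l 2" "j < 2 \<Longrightarrow> count l j = 0"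
    "count l (Suc r) = 0" "size (filter_mset (\<lambda>y. y \<le> r) l) = r"
proof -
  note lA = A2_partsD[OF l]
  show cR: "2 \<le> count l (R1 l)" using R1_eq_0_or_count_ge_2[of l] R by simp
  have R_even: "even (R1 l)" using cR lA(2)[of "R1 l"] by linarith
  then show R2: "2 \<le> R1 l" using R by presburger
  show "2 \<le> count l 2" using cR lA(4)[of 2] R2 by (cases "R1 l = 2") auto
  show "j < 2 \<Longrightarrow> count l j = 0" using lA(1) lA(3)[of 1] R2 by (auto dest: less_2_cases)
  have "R1 l \<le> size (filter_mset (\<lambda>y. y \<le> R1 l) l)"
    using A2_size_filter_even[OF l cR, of "R1 l div 2"] R_even by simp
  then show "R1 l \<le> r" unfolding r_def by (rule le_split_point)
  have "r \<le> size (filter_mset (\<lambda>y. y \<le> r) l)"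
    "size (filter_mset (\<lambda>y. y \<le> Suc r) l) < Suc r"
    unfolding r_def by (rule split_point_le_size, rule size_lt_Suc_split_point)
  then show "count l (Suc r) = 0" "size (filter_mset (\<lambda>y. y \<le> r) l) = r"
    using size_filter_mset_atMost_Suc[of r l] by simp_all
qed

lemma A2_unglue:
  assumes l: "l \<in> A2" and R: "R1 l \<noteq> 0"
  defines "r \<equiv> split_point l"
  defines "T \<equiv> filter_mset (\<lambda>y. r < y) l"
  shows "glue_admissible r (count l 2) T (middle_parts r l)"
    "glue (count l 2) T (middle_parts r l) = l" "middle_parts r l \<in> A2"
proof -
  let ?c = "count l 2" and ?\<mu> = "middle_parts r l"
  note sp = A2_split_point[OF l R, folded r_def]
  note c\<mu> = count_middle_parts[where r = r and l = l]
  have glue_eq: "count (glue ?c T ?\<mu>) j = count l j" for j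
  proof -
    consider "j < 2" | "j = 2" | "2 < j" by linarith
    then show ?thesis
      by cases (use sp(2,3,5) c\<mu>(1)[of j] c\<mu>(1)[of 2] in \<open>auto simp: count_glue T_def\<close>)
  qed
  then show "glue ?c T ?\<mu> = l" by (intro multiset_eqI) simp
  have "filter_mset (\<lambda>y. y \<le> r) l = glue ?c {#} ?\<mu>"
  proof (rule multiset_eqI)
    fix x
    have "count l x = count (glue ?c T ?\<mu>) x" using glue_eq by simp
    then show "count (filter_mset (\<lambda>y. y \<le> r) l) x = count (glue ?c {#} ?\<mu>) x"
      using sp(2,3) c\<mu>(1)[of x] by (auto simp: count_glue T_def)
  qed
  then have size\<mu>: "?c + size ?\<mu> = r" using sp(7) by (simp add: glue_def)
  have T_ge: "\<forall>x\<in>#T. r + 2 \<le> x"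
  proof
    fix x assume "x \<in># T"
    then have "r < x" "x \<noteq> Suc r" using sp(6) by (auto simp: T_def not_in_iff[symmetric])
    then show "r + 2 \<le> x" by linarith
  qed
  have T1: "\<forall>x. count T x \<le> 1"
  proof
    fix x
    have "r < x \<Longrightarrow> \<not> 2 \<le> count l x" using le_R1[of l x] sp(3) by linarith
    then show "count T x \<le> 1" by (auto simp: T_def)
  qed
  have \<mu>_parts: "\<forall>x\<in>#?\<mu>. 0 < x \<and> x + 2 \<le> r"
    using c\<mu>(2) by (auto split: if_splits simp flip: count_greater_zero_iff)
  show "glue_admissible r ?c T ?\<mu>"
    unfolding glue_admissible_def using sp(4) size\<mu> T_ge T1 \<mu>_parts by blast
  show "?\<mu> \<in> A2" by (rule A2_middle_parts[OF l sp(1,3)])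
qed

section \<open>The map f\<close>

lemma f_eq_self:
  assumes "p \<in> G2" "D p = 0"
  shows "f p = p"
proof -
  have "piK p 0 = p"
    using G2_count_0[OF assms(1)] assms(2) by (intro multiset_eqI) (auto simp: piK_0 R_eq_0)
  then show ?thesis unfolding f_def using assms(2) by simp
qed

lemma R_1_add_size_piK_0_le:
  assumes p: "p \<in> G2" and le: "\<forall>x\<in>#p. x \<le> b"
  shows "R p 1 + size (piK p 0) \<le> b"
proof (cases "D p = 0")
  case True
  have "size p \<le> card {1..b}"
  proof (rule size_le_card_if_count_le_1)
    show "set_mset p \<subseteq> {1..b}"
      using le p by (auto simp: G2_def is_partition_def Suc_le_eq intro: gr0I)
  qed (use G2_no_repeats[OF p True] in auto)
  moreover have "piK p 0 = p" "R p 1 = 0"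
    using f_eq_self[OF p True] True by (simp_all add: f_def R_eq_0)
  ultimately show ?thesis by simp
next
  case False
  let ?m = "R p 1"
  have "size (piK p 0) \<le> card {?m + 2..b}"
    using G2_peel(6,7)[OF p False] le by (intro size_le_card_if_count_le_1) (auto simp: piK_0)
  moreover have "?m \<le> b" using le G2_peel(3)[OF p False] by (simp flip: count_greater_zero_iff)
  ultimately show ?thesis by simp
qed

text \<open>The first bound keeps the truncated subtraction in the multiplicity of 2 exact.\<close>

lemma f_lower_part:
  assumes p: "p \<in> G2" and D: "D p \<noteq> 0"
  defines "q \<equiv> lower_part p"
  shows "R q 1 + size (piK q 0) + 2 \<le> R p 1"
    "f p = replicate_mset (R p 1 - R q 1 - size (piK q 0)) 2 + piK p 0 + image_mset (\<lambda>x. x + 2) (f q)"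
proof -
  note peel = G2_peel[OF p D, folded q_def]
  have "\<forall>x\<in>#q. x \<le> R p 1 - 2" using peel(5) by force
  then show "R q 1 + size (piK q 0) + 2 \<le> R p 1"
    using R_1_add_size_piK_0_le[OF peel(4)] peel(2) by fastforce
  show "f p = replicate_mset (R p 1 - R q 1 - size (piK q 0)) 2 + piK p 0 + image_mset (\<lambda>x. x + 2) (f q)"
    using f_Rlist_Cons[OF peel(8) q_def[unfolded lower_part_def, THEN meta_eq_to_obj_eq] peel(9)] .
qed

lemma size_f: "p \<in> G2 \<Longrightarrow> size (f p) = R p 1 + size (piK p 0)"
proof (induction p rule: G2_induct)
  case (no_repeats p)
  then show ?case using f_eq_self[of p] by (simp add: f_def R_eq_0)
next
  case (peel p)
  then show ?case using f_lower_part[OF peel(1,2)] by simp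
qed

lemma f_eq_glue:
  assumes p: "p \<in> G2" and D: "D p \<noteq> 0"
  shows "size (f (lower_part p)) + 2 \<le> R p 1"
    "f p = glue (R p 1 - size (f (lower_part p))) (piK p 0) (f (lower_part p))"
  using f_lower_part[OF p D] size_f[OF G2_peel(4)[OF p D]] by (simp_all add: glue_def)

lemma f_parts_pos_le:
  "p \<in> G2 \<Longrightarrow> \<forall>x\<in>#p. x \<le> b \<Longrightarrow> \<forall>y\<in>#f p. 0 < y \<and> y \<le> b"
proof (induction p arbitrary: b rule: G2_induct)
  case (no_repeats p)
  then show ?case using f_eq_self[OF no_repeats(1,2)] G2_count_0[OF no_repeats(1)]
    by (auto intro: gr0I simp flip: count_greater_zero_iff)
next
  case (peel p)
  note peel_p = G2_peel[OF peel(1,2)]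
  have "\<forall>x\<in>#lower_part p. x \<le> R p 1 - 2" using peel_p(5) by force
  then have "\<forall>y\<in>#f (lower_part p). 0 < y \<and> y \<le> R p 1 - 2" by (rule peel(3))
  moreover have "R p 1 \<le> b" using peel(4) peel_p(3) by (simp flip: count_greater_zero_iff)
  ultimately show ?case
    using peel_p(2,6) peel(4) unfolding f_eq_glue(2)[OF peel(1,2)] glue_def piK_0 by auto
qed

lemma glue_admissible_f:
  assumes p: "p \<in> G2" and D: "D p \<noteq> 0"
  shows "glue_admissible (R p 1) (R p 1 - size (f (lower_part p))) (piK p 0) (f (lower_part p))"
proof -
  note peel = G2_peel[OF p D]
  have "\<forall>x\<in>#lower_part p. x \<le> R p 1 - 2" using peel(5) by force
  then have "\<forall>y\<in>#f (lower_part p). 0 < y \<and> y + 2 \<le> R p 1"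
    using f_parts_pos_le[OF peel(4)] peel(2) by fastforce
  then show ?thesis unfolding glue_admissible_def using f_eq_glue(1)[OF p D] peel(6,7) by auto
qed

lemma sum_mset_f: "p \<in> G2 \<Longrightarrow> sum_mset (f p) = sum_mset p"
proof (induction p rule: G2_induct)
  case (no_repeats p)
  then show ?case by (simp add: f_eq_self)
next
  case (peel p)
  let ?m = "R p 1" and ?q = "lower_part p"
  have "sum_mset p = sum_mset (piK p 0) + 2 * ?m + sum_mset ?q"
    by (subst G2_peel(1)[OF peel(1,2)]) (simp add: sum_mset_replicate_mset)
  moreover have "sum_mset (f p) = 2 * (?m - size (f ?q)) + sum_mset (piK p 0) + (sum_mset (f ?q) + 2 * size (f ?q))"
    by (simp only: f_eq_glue(2)[OF peel(1,2)] glue_def sum_mset.union sum_mset_image_mset_add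
        sum_mset_replicate_mset) simp
  ultimately show ?case using f_eq_glue(1)[OF peel(1,2)] peel(3) by simp
qed

lemma G2_parts_le_if_f_parts_le:
  assumes p: "p \<in> G2" and size_le: "size (f p) \<le> b" and parts_le: "\<forall>y\<in>#f p. y \<le> b"
  shows "\<forall>x\<in>#p. x \<le> b"
proof (cases "D p = 0")
  case True
  then show ?thesis using parts_le f_eq_self[OF p] by simp
next
  case False
  note peel = G2_peel[OF p False]
  have "R p 1 \<le> size (f p)" using f_eq_glue[OF p False] by (simp add: glue_def)
  moreover have "\<forall>x\<in>#piK p 0. x \<le> b" using parts_le f_eq_glue(2)[OF p False] by (simp add: glue_def)
  ultimately show ?thesis using size_le peel(5) by (subst peel(1)) auto
qed

lemma f_in_A2: "p \<in> G2 \<Longrightarrow> f p \<in> A2"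
proof (induction p rule: G2_induct)
  case (no_repeats p)
  have "R1 p \<le> 0"
  proof (rule R1_le)
    fix j assume "2 \<le> count p j"
    then show "j \<le> 0" using G2_no_repeats[OF no_repeats, of j] by simp
  qed
  then show ?case using no_repeats f_eq_self G2_no_repeats G2_count_0 by (intro A2I) auto
next
  case (peel p)
  then show ?case using f_eq_glue(2) glue_in_A2 glue_admissible_f by metis
qed

lemma count_2_f_ge_2:
  assumes "p \<in> G2" "D p \<noteq> 0"
  shows "2 \<le> count (f p) 2"
  using count_2_glue[OF glue_admissible_f[OF assms]] glue_admissibleD(1)[OF glue_admissible_f[OF assms]]
  by (simp add: f_eq_glue(2)[OF assms])

lemma f_inj: "p \<in> G2 \<Longrightarrow> p' \<in> G2 \<Longrightarrow> f p = f p' \<Longrightarrow> p = p'"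
proof (induction p arbitrary: p' rule: G2_induct)
  case (no_repeats p)
  then show ?case
    using f_eq_self count_2_f_ge_2 G2_no_repeats[OF no_repeats(1,2), of 2] by fastforce
next
  case (peel p)
  have D': "D p' \<noteq> 0"
    using peel count_2_f_ge_2[OF peel(1,2)] f_eq_self G2_no_repeats[OF peel(4), of 2] by fastforce
  note eq = glue_inj[OF glue_admissible_f[OF peel(1,2)] glue_admissible_f[OF peel(4) D']]
  have "glue (R p 1 - size (f (lower_part p))) (piK p 0) (f (lower_part p))
      = glue (R p' 1 - size (f (lower_part p'))) (piK p' 0) (f (lower_part p'))"
    using peel(5) f_eq_glue(2)[OF peel(1,2)] f_eq_glue(2)[OF peel(4) D'] by simp
  note eq = eq[OF this]
  have "lower_part p = lower_part p'" using peel(3)[OF G2_peel(4)[OF peel(4) D'] eq(3)] .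
  then show ?case using G2_peel(1)[OF peel(1,2)] G2_peel(1)[OF peel(4) D'] eq(1,2) by simp
qed

lemma f_surj: "l \<in> A2 \<Longrightarrow> \<exists>p\<in>G2. f p = l"
proof (induction "size l" arbitrary: l rule: less_induct)
  case less
  show ?case
  proof (cases "R1 l = 0")
    case True
    then show ?thesis using A2_R1_eq_0[OF less.prems] f_eq_self by blast
  next
    case False
    define r where "r = split_point l"
    define T where "T = filter_mset (\<lambda>y. r < y) l"
    define \<mu> where "\<mu> = middle_parts r l"
    note unglue = A2_unglue[OF less.prems False, folded r_def, folded T_def \<mu>_def]
    note adm = glue_admissibleD[OF unglue(1)]
    have "size \<mu> < size l" using adm(1) arg_cong[OF unglue(2), of size] by (simp add: glue_def)
    then obtain q where q: "q \<in> G2" and fq: "f q = \<mu>" using less.hyps unglue(3) by blast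
    have "\<forall>x\<in>#q. x \<le> r - 2"
      using unglue(1) adm(1,2) fq
      by (intro G2_parts_le_if_f_parts_le[OF q]) (auto simp: glue_admissible_def)
    then have q_le: "\<forall>x\<in>#q. x + 2 \<le> r" using adm(1,2) by fastforce
    define p where "p = T + replicate_mset 2 r + q"
    note unpeel = G2_unpeel[OF q q_le _ _ _ p_def]
    have r2: "2 \<le> r" using adm(1,2) by simp
    have p: "p \<in> G2" and D: "D p \<noteq> 0" and "R p 1 = r" "piK p 0 = T" "lower_part p = q"
      using unpeel unglue(1) r2 by (auto simp: glue_admissible_def)
    then have "f p = glue (r - size \<mu>) T \<mu>" using f_eq_glue(2)[OF p D] fq by simp
    also have "\<dots> = l" using unglue(2) adm(2)[symmetric] by simp
    finally show ?thesis using p by blast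
  qed
qed

theorem theorem4:
  shows "bij_betw f G2 A2 \<and> (\<forall>p\<in>G2. sum_mset (f p) = sum_mset p)"
proof -
  have "inj_on f G2" using f_inj by (intro inj_onI)
  moreover have "f ` G2 = A2" using f_in_A2 f_surj by blast
  ultimately show ?thesis using sum_mset_f by (simp add: bij_betw_def)
qed

end
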